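(* Let $M,N\in su(1,1)$ be linearly independent and suppose that the set $\{u\in\mathbb{R}\mid \langle M+uN,\,M^{\dagger}+uN^{\dagger}\rangle<0\}$ is nonempty. Then $M$, $N$ and $[M,N]=MN-NM$ form a basis of $su(1,1)$ (as a real vector space).
   Context: $su(1,1)$ denotes the three-dimensional real Lie algebra of $2\times 2$ complex matrices spanned over $\mathbb{R}$ by $K_x=\frac12\begin{pmatrix}0&-i\\ i&0\end{pmatrix}$, $K_y=\frac12\begin{pmatrix}0&-1\\-1&0\end{pmatrix}$, $K_z=\frac12\begin{pmatrix}-i&0\\0&i\end{pmatrix}$. For matrices $M,N$ the inner product is $\langle M,N\rangle=2\,\mathrm{Tr}(MN^{\dagger})$, where $N^{\dagger}$ is the conjugate transpose of $N$. *)

theory Defs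
  imports "HOL-Analysis.Analysis"
begin

type_synonym cmat2 = "complex^2^2"

definition Kx :: cmat2 where
  "Kx = vector [vector [0, - \<i>/2], vector [\<i>/2, 0]]"
definition Ky :: cmat2 where
  "Ky = vector [vector [0, -1/2], vector [-1/2, 0]]"
definition Kz :: cmat2 where
  "Kz = vector [vector [- \<i>/2, 0], vector [0, \<i>/2]]"

text \<open>su(1,1): the real span of Kx, Ky, Kz (span = real span, matrices as a real vector space).\<close>
definition su11 :: "cmat2 set" where
  "su11 = span {Kx, Ky, Kz}"

definition adj :: "cmat2 \<Rightarrow> cmat2" where
  "adj A = (\<chi> i j. cnj (A $ j $ i))"

definition ip :: "cmat2 \<Rightarrow> cmat2 \<Rightarrow> complex" where
  "ip M N = 2 * trace (M ** adj N)"

definition comm :: "cmat2 \<Rightarrow> cmat2 \<Rightarrow> cmat2" where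
  "comm M N = M ** N - N ** M"

end

theory Submission
  imports Defs
begin

text \<open>On \<open>su11\<close> the real form \<open>2 Re (trace (X ** Y))\<close> is a Lorentzian (signature (2,1)) form,
  and the commutator is the corresponding cross product: \<open>[T, N]\<close> is orthogonal to \<open>T\<close> and \<open>N\<close>,
  and its square is minus the Gram determinant of \<open>T, N\<close>. The hypothesis provides a timelike
  vector \<open>T = M + u N\<close> in the plane of \<open>M, N\<close>, so the plane has Lorentzian signature and
  \<open>[M, N] = [T, N]\<close> is spacelike. Being orthogonal to the plane, it then lies outside it, which
  gives independence; since \<open>su11\<close> has dimension at most 3, the three elements span it.\<close>

definition su11_of :: "real \<Rightarrow> real \<Rightarrow> real \<Rightarrow> cmat2" where
  "su11_of a b c = a *\<^sub>R Kx + b *\<^sub>R Ky + c *\<^sub>R Kz"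

lemma su11_of_entries:
  "su11_of a b c $ 1 $ 1 = - \<i> * c / 2" "su11_of a b c $ 1 $ 2 = - \<i> * a / 2 - b / 2"
  "su11_of a b c $ 2 $ 1 = \<i> * a / 2 - b / 2" "su11_of a b c $ 2 $ 2 = \<i> * c / 2"
  by (simp_all add: su11_of_def Kx_def Ky_def Kz_def) (simp_all add: scaleR_conv_of_real field_simps)

lemma su11_iff: "X \<in> su11 \<longleftrightarrow> (\<exists>a b c. X = su11_of a b c)"
  by (simp add: su11_def su11_of_def span_insert span_empty algebra_simps eq_diff_eq)

lemma comm_su11_of:
  "comm (su11_of a b c) (su11_of a' b' c') =
     su11_of (b * c' - c * b') (c * a' - a * c') (b * a' - a * b')"
  by (simp add: comm_def vec_eq_iff forall_2 matrix_matrix_mult_def sum_2 su11_of_entries)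
     (simp add: complex_eq_iff field_simps)

lemma comm_in_su11: "M \<in> su11 \<Longrightarrow> N \<in> su11 \<Longrightarrow> comm M N \<in> su11"
  unfolding su11_iff using comm_su11_of by blast

lemma comm_add_scaleR_left: "comm (M + u *\<^sub>R N) N = comm M N"
  by (simp add: comm_def vec_eq_iff forall_2 matrix_matrix_mult_def sum_2 algebra_simps)

definition trace_form :: "complex^'n^'n \<Rightarrow> complex^'n^'n \<Rightarrow> real" where
  "trace_form X Y = 2 * Re (trace (X ** Y))"

lemma trace_form_commute: "trace_form X Y = trace_form Y X"
  unfolding trace_form_def by (subst trace_mul_sym) (rule refl)

lemma trace_form_add_left: "trace_form (X + Z) Y = trace_form X Y + trace_form Z Y"
  by (simp add: trace_form_def trace_def matrix_matrix_mult_def distrib_right sum.distrib)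

lemma trace_form_scaleR_left: "trace_form (c *\<^sub>R X) Y = c * trace_form X Y"
  by (simp add: trace_form_def trace_def scalar_matrix_assoc[symmetric] sum_distrib_left
      mult.left_commute)

lemma linear_trace_form_left: "linear (\<lambda>X. trace_form X Y)"
  by (rule linearI) (simp_all add: trace_form_add_left trace_form_scaleR_left)

lemma trace_form_diff_left: "trace_form (X - Z) Y = trace_form X Y - trace_form Z Y"
  by (rule linear_diff[OF linear_trace_form_left])

lemma trace_form_comm_left: "trace_form (comm X Y) X = 0"
proof -
  have "trace (X ** Y ** X) = trace (Y ** X ** X)"
    by (metis matrix_mul_assoc trace_mul_sym)
  moreover have "trace_form (comm X Y) X = trace_form (X ** Y) X - trace_form (Y ** X) X"
    unfolding comm_def by (rule linear_diff[OF linear_trace_form_left])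
  ultimately show ?thesis
    by (simp add: trace_form_def)
qed

lemma trace_form_comm_right: "trace_form (comm X Y) Y = 0"
proof -
  have "trace (X ** Y ** Y) = trace (Y ** X ** Y)"
    by (metis matrix_mul_assoc trace_mul_sym)
  moreover have "trace_form (comm X Y) Y = trace_form (X ** Y) Y - trace_form (Y ** X) Y"
    unfolding comm_def by (rule linear_diff[OF linear_trace_form_left])
  ultimately show ?thesis
    by (simp add: trace_form_def)
qed

lemma adj_add_scaleR: "adj X + u *\<^sub>R adj Y = adj (X + u *\<^sub>R Y)"
  by (simp add: adj_def vec_eq_iff)

lemma ip_adj_self: "Re (ip X (adj X)) = trace_form X X"
  by (simp add: ip_def adj_def trace_form_def vec_eq_iff)

lemma trace_form_su11_of:
  "trace_form (su11_of a b c) (su11_of a' b' c') = a * a' + b * b' - c * c'"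
  by (simp add: trace_form_def matrix_matrix_mult_def sum_2 su11_of_entries trace_def)

lemma lorentz_orthogonal_to_timelike:
  fixes a b c p q r :: real
  assumes timelike: "a\<^sup>2 + b\<^sup>2 < c\<^sup>2" and orth: "a * p + b * q = c * r"
    and nonzero: "(p, q, r) \<noteq> (0, 0, 0)"
  shows "r\<^sup>2 < p\<^sup>2 + q\<^sup>2"
proof -
  have "0 \<le> a\<^sup>2 + b\<^sup>2" by simp
  then have "c\<^sup>2 > 0" using timelike by linarith
  have pq: "p\<^sup>2 + q\<^sup>2 > 0"
  proof (rule ccontr)
    assume "\<not> p\<^sup>2 + q\<^sup>2 > 0"
    then have "p = 0" "q = 0" by (simp_all add: not_less sum_power2_le_zero_iff)
    with orth \<open>c\<^sup>2 > 0\<close> nonzero show False by simp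
  qed
  have "c\<^sup>2 * r\<^sup>2 = (a * p + b * q)\<^sup>2"
    by (simp add: orth power_mult_distrib)
  also have "\<dots> \<le> (a * p + b * q)\<^sup>2 + (a * q - b * p)\<^sup>2"
    by simp
  also have "\<dots> = (a\<^sup>2 + b\<^sup>2) * (p\<^sup>2 + q\<^sup>2)"
    by (simp add: power2_eq_square algebra_simps)
  also have "\<dots> < c\<^sup>2 * (p\<^sup>2 + q\<^sup>2)"
    using timelike pq by (simp add: mult_strict_right_mono)
  finally show ?thesis
    using \<open>c\<^sup>2 > 0\<close> by (simp add: mult_less_cancel_left_pos)
qed

lemma su11_orthogonal_to_timelike:
  assumes "T \<in> su11" "X \<in> su11" and "trace_form T T < 0" and "trace_form T X = 0"
    and "X \<noteq> 0"
  shows "trace_form X X > 0"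
proof -
  obtain a b c where T: "T = su11_of a b c" using \<open>T \<in> su11\<close> su11_iff by blast
  obtain p q r where X: "X = su11_of p q r" using \<open>X \<in> su11\<close> su11_iff by blast
  have "(p, q, r) \<noteq> (0, 0, 0)" using \<open>X \<noteq> 0\<close> by (auto simp: X su11_of_def)
  with assms(3,4) have "r\<^sup>2 < p\<^sup>2 + q\<^sup>2"
    by (intro lorentz_orthogonal_to_timelike) (auto simp: T X trace_form_su11_of power2_eq_square)
  then show ?thesis by (simp add: X trace_form_su11_of power2_eq_square)
qed

text \<open>Lagrange's identity for the commutator, which in the coordinates of \<open>su11_of\<close> is the cross
  product of the form \<open>a a' + b b' - c c'\<close>.\<close>

lemma trace_form_comm_comm:
  assumes "T \<in> su11" "N \<in> su11"
  shows "trace_form (comm T N) (comm T N) = (trace_form T N)\<^sup>2 - trace_form T T * trace_form N N"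
proof -
  obtain a b c where "T = su11_of a b c" using assms(1) su11_iff by blast
  moreover obtain a' b' c' where "N = su11_of a' b' c'" using assms(2) su11_iff by blast
  ultimately show ?thesis
    by (simp add: comm_su11_of trace_form_su11_of power2_eq_square algebra_simps)
qed

lemma independent_pair_combination_zero:
  fixes x y :: "'a::real_vector"
  assumes "independent {x, y}" "x \<noteq> y" and "a *\<^sub>R x + b *\<^sub>R y = 0"
  shows "a = 0 \<and> b = 0"
proof (cases "a = 0")
  case True
  with assms(3) have "b *\<^sub>R y = 0" by simp
  moreover have "y \<noteq> 0" using assms(1) dependent_zero[of "{x, y}"] by auto
  ultimately show ?thesis using True by simp
next
  case False
  have "a *\<^sub>R x = (- b) *\<^sub>R y" using assms(3) by (simp add: eq_neg_iff_add_eq_0)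
  have "x = (1 / a) *\<^sub>R (a *\<^sub>R x)" using False by simp
  also have "\<dots> = (- b / a) *\<^sub>R y" using \<open>a *\<^sub>R x = (- b) *\<^sub>R y\<close> by simp
  finally have "x \<in> span {y}" by (simp only: span_scale span_base singletonI)
  moreover have "{x, y} - {x} = {y}" using assms(2) by auto
  ultimately have "dependent {x, y}" unfolding dependent_def by (intro bexI[of _ x]) simp_all
  with assms(1) show ?thesis by contradiction
qed

lemma comm_spacelike:
  assumes "M \<in> su11" "N \<in> su11" "independent {M, N}" "M \<noteq> N"
    and timelike: "trace_form (M + u *\<^sub>R N) (M + u *\<^sub>R N) < 0"
  shows "trace_form (comm M N) (comm M N) > 0"
proof -
  define T where "T = M + u *\<^sub>R N"
  define s where "s = trace_form T N / trace_form T T"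
  define N' where "N' = N - s *\<^sub>R T"
  \<comment> \<open>\<open>N'\<close> is the component of \<open>N\<close> orthogonal to \<open>T\<close>; completing the square turns the
      Lagrange identity into \<open>trace_form (comm T N) (comm T N) = - trace_form T T * trace_form N' N'\<close>.\<close>
  have T_su11: "T \<in> su11" and N'_su11: "N' \<in> su11"
    using assms(1,2) by (simp_all add: T_def N'_def su11_def span_add span_diff span_scale)
  have "trace_form T T < 0" using timelike by (simp add: T_def)
  have orth: "trace_form T N' = 0"
    using \<open>trace_form T T < 0\<close> trace_form_commute[of N' T] trace_form_commute[of N T]
    by (simp add: N'_def s_def trace_form_diff_left trace_form_scaleR_left)
  have "N' = (1 - s * u) *\<^sub>R N + (- s) *\<^sub>R M"
    by (simp add: N'_def T_def algebra_simps)
  then have "N' \<noteq> 0"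
    using independent_pair_combination_zero[OF assms(3,4), of "- s" "1 - s * u"]
    by (auto simp: add.commute)
  then have "trace_form N' N' > 0"
    using su11_orthogonal_to_timelike[OF T_su11 N'_su11 \<open>trace_form T T < 0\<close> orth] by simp
  have "trace_form N' N' = trace_form N N - s * trace_form T N"
    using orth trace_form_commute[of N' T] trace_form_commute[of N' N] trace_form_commute[of T N]
    by (simp add: N'_def trace_form_diff_left trace_form_scaleR_left)
  then have "trace_form (comm T N) (comm T N) = - trace_form T T * trace_form N' N'"
    using trace_form_comm_comm[OF T_su11 assms(2)] \<open>trace_form T T < 0\<close>
    by (simp add: s_def power2_eq_square field_simps)
  then show ?thesis
    using \<open>trace_form N' N' > 0\<close> \<open>trace_form T T < 0\<close>
    by (simp add: T_def comm_add_scaleR_left mult_neg_pos)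
qed

lemma not_in_span_if_trace_form_orthogonal:
  assumes "\<And>x. x \<in> S \<Longrightarrow> trace_form x W = 0" and "trace_form W W \<noteq> 0"
  shows "W \<notin> span S"
  using linear_eq_0_on_span[OF linear_trace_form_left[of W] assms(1)] assms(2) by auto

lemma dim_su11_le: "dim su11 \<le> 3"
proof -
  have "dim su11 \<le> card {Kx, Ky, Kz}"
    unfolding su11_def by (rule dim_le_card) auto
  also have "\<dots> \<le> 3" by (simp add: card_insert_le_m1)
  finally show ?thesis .
qed

theorem lemma3p2:
  fixes M N :: cmat2
  assumes "M \<in> su11" and "N \<in> su11"
    and "M \<noteq> N" and "independent {M, N}"
    and "\<exists>u::real. Im (ip (M + u *\<^sub>R N) (adj M + u *\<^sub>R adj N)) = 0
                  \<and> Re (ip (M + u *\<^sub>R N) (adj M + u *\<^sub>R adj N)) < 0"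
  shows "comm M N \<in> su11 \<and> card {M, N, comm M N} = 3
         \<and> independent {M, N, comm M N} \<and> span {M, N, comm M N} = su11"
proof -
  \<comment> \<open>The condition on the imaginary part is automatic on \<open>su11\<close> and not needed.\<close>
  obtain u where "trace_form (M + u *\<^sub>R N) (M + u *\<^sub>R N) < 0"
    using assms(5) by (auto simp: adj_add_scaleR ip_adj_self)
  then have pos: "trace_form (comm M N) (comm M N) > 0"
    by (rule comm_spacelike[OF assms(1,2,4,3)])
  have W_su11: "comm M N \<in> su11" using assms(1,2) by (rule comm_in_su11)
  have "comm M N \<notin> span {M, N}"
  proof (rule not_in_span_if_trace_form_orthogonal)
    show "trace_form x (comm M N) = 0" if "x \<in> {M, N}" for x
      using that trace_form_comm_left[of M N] trace_form_comm_right[of M N]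
        trace_form_commute[of M "comm M N"] trace_form_commute[of N "comm M N"] by auto
  qed (use pos in simp)
  then have "comm M N \<noteq> M" "comm M N \<noteq> N"
    using span_base[of _ "{M, N}"] by auto
  then have card: "card {M, N, comm M N} = 3"
    using assms(3) by simp
  have "{M, N, comm M N} = insert (comm M N) {M, N}" by auto
  then have indep: "independent {M, N, comm M N}"
    using independent_insertI[OF \<open>comm M N \<notin> span {M, N}\<close> assms(4)] by simp
  have sub: "{M, N, comm M N} \<subseteq> su11" using assms(1,2) W_su11 by simp
  have "su11 \<subseteq> span {M, N, comm M N}"
    using card_ge_dim_independent[OF sub indep] dim_su11_le card by simp
  moreover have "span {M, N, comm M N} \<subseteq> su11"
    using sub unfolding su11_def by (simp add: span_minimal)
  ultimately show ?thesis using W_su11 card indep by blast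
qed

end
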